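(* Let $\mathcal{D}$ be a $p$-unipotent differential operator and let $k$ be a finite field of characteristic $p$ such that $\mathcal{D}_p$ has coefficients in $k(z)$. If $\ker(k(z),\mathcal{D}_p)\neq0$, then $\dim_{k(z^p)}\ker(k(z),\mathcal{D}_p)=1$.
   Context: $\ker(k(z),\mathcal{D}_p)$ is the set of solutions of $\mathcal{D}_p$ in $k(z)$; it is a $k(z^p)$-vector space. $\delta=z\,d/dz$. $\mathbb{C}_p$ is the completion of an algebraic closure of $\mathbb{Q}_p$; $E_p$ is the completion of $\mathbb{C}_p(z)$ for the Gauss norm; $\vartheta_{E_p}$ its ring of elements of norm $\le1$ with maximal ideal $\mathfrak{m}_p$; $\vartheta_{E_p}/\mathfrak{m}_p$ is identified with a subfield of $\overline{\mathbb{F}_p}(z)$, and for an operator $\mathcal{D}$ with coefficients in $\vartheta_{E_p}$, $\mathcal{D}_p$ is the reduction of its coefficients modulo $\mathfrak{m}_p$. MOM at zero (over any field $K$): for monic $L=\frac{d^n}{dz^n}+a_1\frac{d^{n-1}}{dz^{n-1}}+\dots+a_n\in K(z)[d/dz]$, $\alpha\in\overline K$ is singular if a pole of some $a_i$, regular singular if moreover each $(z-\alpha)^ia_i$ has no pole at $\alpha$; $\infty$ is regular singular if $0$ is regular singular after $z\mapsto1/z$; $L$ is Fuchsian if $\infty$ and all finite singular points are regular singular; writing $z^nL=\delta^n+b_1\delta^{n-1}+\dots+b_n$, the exponents at $0$ are the roots of $x^n+b_1(0)x^{n-1}+\dots+b_n(0)$; $L$ is MOM at zero if Fuchsian, $0$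 regular singular and all exponents at $0$ zero. An operator with coefficients in $E_p$ is $p$-unipotent if its coefficients lie in $\vartheta_{E_p}$ and its reduction modulo $\mathfrak{m}_p$ is nonzero and MOM at zero. *)

theory Defs
  imports "HOL-Computational_Algebra.Computational_Algebra"
begin

type_synonym 'k ratfun = "'k poly fract"

definition rrep :: "'k::field ratfun \<Rightarrow> 'k poly \<times> 'k poly" where
  "rrep f = (SOME (a, b). b \<noteq> 0 \<and> lead_coeff b = 1 \<and> coprime a b \<and> f = Fract a b)"

definition rnum :: "'k::field ratfun \<Rightarrow> 'k poly" where
  "rnum f = fst (rrep f)"

definition rden :: "'k::field ratfun \<Rightarrow> 'k poly" where
  "rden f = snd (rrep f)"

definition rderiv :: "'k::field ratfun \<Rightarrow> 'k ratfun" where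
  "rderiv f = Fract (pderiv (rnum f) * rden f - rnum f * pderiv (rden f)) (rden f * rden f)"

text \<open>A differential operator L = sum_{i<=n} c i (d/dz)^i in k(z)[d/dz];
  it is given by its order n and coefficient function c (only c 0..c n matter).\<close>
definition apply_op :: "nat \<Rightarrow> (nat \<Rightarrow> 'k::field ratfun) \<Rightarrow> 'k ratfun \<Rightarrow> 'k ratfun" where
  "apply_op n c f = (\<Sum>i\<le>n. c i * (rderiv ^^ i) f)"

text \<open>Coefficients of the monic normalisation d^n/dz^n + a_1 d^{n-1}/dz^{n-1} + ... + a_n.\<close>
definition monic_coeff :: "nat \<Rightarrow> (nat \<Rightarrow> 'k::field ratfun) \<Rightarrow> nat \<Rightarrow> 'k ratfun" where
  "monic_coeff n c j = c (n - j) / c n"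

definition rz :: "'k::field ratfun" where
  "rz = Fract [:0, 1:] 1"

definition reval0 :: "'k::field ratfun \<Rightarrow> 'k" where
  "reval0 f = poly (rnum f) 0 / poly (rden f) 0"

text \<open>Finite singular points are regular singular.  For a finite field k every
  irreducible polynomial q is separable, so for every root alpha of q in the
  algebraic closure the pole order of a at alpha equals the largest e with q^e dividing
  the (reduced) denominator of a.  Hence "(z-alpha)^j a_j has no pole at alpha for
  every alpha" is: multiplicity q (den a_j) <= j for every irreducible q.\<close>
definition finite_points_regular :: "nat \<Rightarrow> (nat \<Rightarrow> 'k::field ratfun) \<Rightarrow> bool" where
  "finite_points_regular n c \<longleftrightarrow>
     (\<forall>j\<in>{1..n}. \<forall>q::'k poly. irreducible q \<longrightarrow> \<not> q ^ (Suc j) dvd rden (monic_coeff n c j))"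

text \<open>Infinity is regular singular: after z = 1/w, this is the condition that
  a_j = O(z^{-j}) at infinity, i.e. deg(num a_j) + j <= deg(den a_j) whenever a_j is nonzero.\<close>
definition infinity_regular :: "nat \<Rightarrow> (nat \<Rightarrow> 'k::field ratfun) \<Rightarrow> bool" where
  "infinity_regular n c \<longleftrightarrow>
     (\<forall>j\<in>{1..n}. monic_coeff n c j \<noteq> 0 \<longrightarrow>
        degree (rnum (monic_coeff n c j)) + j \<le> degree (rden (monic_coeff n c j)))"

definition fuchsian :: "nat \<Rightarrow> (nat \<Rightarrow> 'k::field ratfun) \<Rightarrow> bool" where
  "fuchsian n c \<longleftrightarrow> finite_points_regular n c \<and> infinity_regular n c"

definition falling_poly :: "nat \<Rightarrow> 'k::field poly" where
  "falling_poly m = (\<Prod>k<m. [:- of_nat k, 1:])"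

text \<open>Indicial polynomial at 0: since z^m (d/dz)^m = delta(delta-1)...(delta-m+1),
  z^n L = sum_j (z^j a_j) z^(n-j) (d/dz)^(n-j) = delta^n + b_1 delta^(n-1) + ... + b_n,
  and x^n + b_1(0) x^(n-1) + ... + b_n(0) = sum_j (z^j a_j)(0) * x(x-1)...(x-n+j+1), a_0 = 1.\<close>
definition indicial_poly :: "nat \<Rightarrow> (nat \<Rightarrow> 'k::field ratfun) \<Rightarrow> 'k poly" where
  "indicial_poly n c =
     (\<Sum>j\<le>n. smult (reval0 (rz ^ j * monic_coeff n c j)) (falling_poly (n - j)))"

text \<open>MOM at zero: Fuchsian (which includes 0 being regular singular) and all
  exponents at 0 are zero; for the monic degree-n indicial polynomial, having 0 as
  its only root in an algebraic closure means it equals x^n.\<close>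
definition MOM_at_zero :: "nat \<Rightarrow> (nat \<Rightarrow> 'k::field ratfun) \<Rightarrow> bool" where
  "MOM_at_zero n c \<longleftrightarrow> fuchsian n c \<and> indicial_poly n c = [:0, 1:] ^ n"

definition sol_space :: "nat \<Rightarrow> (nat \<Rightarrow> 'k::field ratfun) \<Rightarrow> 'k ratfun set" where
  "sol_space n c = {f. apply_op n c f = 0}"

definition subfield_zp :: "nat \<Rightarrow> 'k::field ratfun set" where
  "subfield_zp p = {Fract (a \<circ>\<^sub>p monom 1 p) (b \<circ>\<^sub>p monom 1 p) | a b. True}"

definition dim_one_over :: "'k::field ratfun set \<Rightarrow> 'k ratfun set \<Rightarrow> bool" where
  "dim_one_over K V \<longleftrightarrow> (\<exists>f\<in>V. f \<noteq> 0 \<and> (\<forall>g\<in>V. \<exists>a\<in>K. g = a * f))"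

end

theory Submission
  imports Defs
begin

(* Write a nonzero f in k(z) as z^m F with F regular and nonzero at 0.  If f solves L, the
  leading term of z^n L f / c_n at 0 is (indicial polynomial)(m) * F(0), so m is an exponent;
  for an operator MOM at zero this means m = 0 in k, i.e. p divides ord_0 f.
  Now let f, g be solutions with f nonzero and write g/f = X/D^p.  Polynomials in z^p, such as
  D^p, have derivative 0, so splitting X = P(z^p) + N with N free of monomials z^(p i), the function
  N f = D^p g - P(z^p) f is again a solution.  If N were nonzero, p would divide
  ord_0 (N f) - ord_0 f = ord_0 N, whereas the lowest coefficient of N sits at an exponent prime
  to p.  So N = 0 and g/f = P(z^p)/D^p lies in k(z^p). *)

section \<open>Reduced fractions\<close>

lemma Fract_eq_0_iff: "Fract a b = (0 :: 'a::idom fract) \<longleftrightarrow> a = 0 \<or> b = 0"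
  using eq_fract(1)[of b 1 a 0] by (cases "b = 0") (simp_all add: fract_collapse)

lemma Fract_coprimeE:
  fixes f :: "'k::field ratfun"
  obtains a b where "b \<noteq> 0" "coprime a b" "f = Fract a b"
proof -
  obtain a0 b0 where "f = Fract a0 b0" "b0 \<noteq> 0" by (cases f)
  then obtain b where b: "\<exists>a. b \<noteq> 0 \<and> f = Fract a b"
    and least: "\<And>b'. (\<exists>a'. b' \<noteq> 0 \<and> f = Fract a' b') \<Longrightarrow> degree b \<le> degree b'"
    using ex_has_least_nat[of "\<lambda>b. \<exists>a. b \<noteq> 0 \<and> f = Fract a b" b0 degree] by blast
  then obtain a where b0: "b \<noteq> 0" and fab: "f = Fract a b" by blast
  have "coprime a b"
  proof (rule coprimeI)
    fix d assume "d dvd a" "d dvd b"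
    then obtain a' b' where a': "a = d * a'" and b': "b = d * b'" by (auto elim!: dvdE)
    with b0 have "d \<noteq> 0" "b' \<noteq> 0" by auto
    with fab a' b' have "f = Fract a' b'" by (simp add: mult_fract_cancel)
    with \<open>b' \<noteq> 0\<close> have "degree b \<le> degree b'" by (intro least) blast
    with b' \<open>d \<noteq> 0\<close> \<open>b' \<noteq> 0\<close> have "degree d = 0" by (simp add: degree_mult_eq)
    with \<open>d \<noteq> 0\<close> show "is_unit d" by (simp add: is_unit_iff_degree)
  qed
  with b0 fab show thesis by (intro that)
qed

lemma Fract_normalized_exists:
  fixes f :: "'k::field ratfun"
  shows "\<exists>a b. b \<noteq> 0 \<and> lead_coeff b = 1 \<and> coprime a b \<and> f = Fract a b"
proof -
  obtain a b where b: "b \<noteq> 0" and cop: "coprime a b" and f: "f = Fract a b"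
    by (rule Fract_coprimeE)
  define l where "l = inverse (lead_coeff b)"
  have l: "l \<noteq> 0" using b by (simp add: l_def)
  have "coprime (smult l a) (smult l b)"
    using coprime_mult_self_left_iff[of "[:l:]" a b] cop l
    by (simp add: is_unit_const_poly_iff dvd_field_iff)
  moreover have "f = Fract (smult l a) (smult l b)"
    using f l mult_fract_cancel[of "[:l:]" a b] by simp
  ultimately show ?thesis
    using b l by (intro exI[of _ "smult l a"] exI[of _ "smult l b"]) (simp add: l_def)
qed

lemma
  fixes f :: "'k::field ratfun"
  shows rden_nonzero: "rden f \<noteq> 0"
    and coprime_rnum_rden: "coprime (rnum f) (rden f)"
    and Fract_rnum_rden: "Fract (rnum f) (rden f) = f"
proof -
  have "\<exists>x. case x of (a, b) \<Rightarrow> b \<noteq> 0 \<and> lead_coeff b = 1 \<and> coprime a b \<and> f = Fract a b"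
    using Fract_normalized_exists[of f] by auto
  from someI_ex[OF this]
  show "rden f \<noteq> 0" "coprime (rnum f) (rden f)" "Fract (rnum f) (rden f) = f"
    unfolding rnum_def rden_def rrep_def by (auto simp: case_prod_unfold)
qed

section \<open>The derivation d/dz\<close>

lemma rderiv_Fract:
  fixes a b :: "'k::field poly"
  assumes "b \<noteq> 0"
  shows "rderiv (Fract a b) = Fract (pderiv a * b - a * pderiv b) (b * b)"
proof -
  define n d where "n = rnum (Fract a b)" and "d = rden (Fract a b)"
  have "d \<noteq> 0" "Fract n d = Fract a b"
    unfolding n_def d_def by (rule rden_nonzero, rule Fract_rnum_rden)
  with assms have E: "a * d = n * b" by (simp add: eq_fract)
  then have "pderiv (a * d) = pderiv (n * b)" by simp
  then have E': "a * pderiv d + d * pderiv a = n * pderiv b + b * pderiv n"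
    by (simp add: pderiv_mult)
  have "(pderiv n * d - n * pderiv d) * (b * b) = (pderiv a * b - a * pderiv b) * (d * d)"
    using E E' by algebra
  with assms \<open>d \<noteq> 0\<close> show ?thesis
    unfolding rderiv_def n_def[symmetric] d_def[symmetric] by (simp add: eq_fract)
qed

lemma rderiv_add: "rderiv (x + y) = rderiv x + rderiv (y :: 'k::field ratfun)"
proof -
  obtain a b where x: "x = Fract a b" "b \<noteq> 0" by (cases x)
  obtain c d where y: "y = Fract c d" "d \<noteq> 0" by (cases y)
  show ?thesis unfolding x(1) y(1) using x(2) y(2)
    by (simp add: rderiv_Fract eq_fract pderiv_mult pderiv_add) algebra
qed

lemma rderiv_mult: "rderiv (x * y) = rderiv x * y + x * rderiv (y :: 'k::field ratfun)"
proof -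
  obtain a b where x: "x = Fract a b" "b \<noteq> 0" by (cases x)
  obtain c d where y: "y = Fract c d" "d \<noteq> 0" by (cases y)
  show ?thesis unfolding x(1) y(1) using x(2) y(2)
    by (simp add: rderiv_Fract eq_fract pderiv_mult pderiv_add) algebra
qed

lemma rderiv_Fract_poly: "rderiv (Fract q 1 :: 'k::field ratfun) = Fract (pderiv q) 1"
  by (simp add: rderiv_Fract)

lemma rderiv_0 [simp]: "rderiv (0 :: 'k::field ratfun) = 0"
  using rderiv_Fract_poly[of "0 :: 'k poly"] by (simp add: fract_collapse)

lemma rderiv_1 [simp]: "rderiv (1 :: 'k::field ratfun) = 0"
  using rderiv_Fract_poly[of "1 :: 'k poly"] by (simp add: fract_collapse)

lemma rderiv_minus: "rderiv (- x) = - rderiv (x :: 'k::field ratfun)"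
  using rderiv_add[of x "- x"] by (simp add: eq_neg_iff_add_eq_0 add.commute)

lemma rderiv_diff: "rderiv (x - y) = rderiv x - rderiv (y :: 'k::field ratfun)"
  using rderiv_add[of x "- y"] by (simp add: rderiv_minus)

lemma rderiv_rz [simp]: "rderiv (rz :: 'k::field ratfun) = 1"
  by (simp add: rz_def rderiv_Fract_poly pderiv_pCons pCons_one fract_collapse)

lemma rderiv_inverse:
  fixes x :: "'k::field ratfun"
  assumes "x \<noteq> 0"
  shows "rderiv (inverse x) = - rderiv x / x\<^sup>2"
proof -
  have "rderiv x * inverse x + x * rderiv (inverse x) = 0"
    using rderiv_mult[of x "inverse x"] assms by simp
  then have "x\<^sup>2 * rderiv (inverse x) = - rderiv x"
    using assms by (simp add: field_simps power2_eq_square eq_neg_iff_add_eq_0)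
  with assms show ?thesis by (simp add: field_simps)
qed

lemma rz_nonzero [simp]: "(rz :: 'k::field ratfun) \<noteq> 0"
  by (simp add: rz_def Fract_eq_0_iff)

lemma rz_power: "rz ^ j = (Fract ([:0,1:] ^ j) 1 :: 'k::field ratfun)"
  by (induction j) (simp_all add: rz_def fract_collapse)

lemma rz_mult_rderiv_rz_power: "rz * rderiv (rz ^ k :: 'k::field ratfun) = of_nat k * rz ^ k"
  by (induction k) (simp_all add: rderiv_mult algebra_simps)

lemma rz_mult_rderiv_rz_power_int:
  "rz * rderiv (rz powi m :: 'k::field ratfun) = of_int m * rz powi m"
proof (cases m rule: int_cases2)
  case (nonneg k)
  then show ?thesis by (simp add: rz_mult_rderiv_rz_power)
next
  case (nonpos k)
  have "rz * rderiv (inverse (rz ^ k)) = - (rz * rderiv (rz ^ k)) / (rz ^ k)\<^sup>2"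
    by (simp add: rderiv_inverse)
  also have "\<dots> = - of_nat k * inverse (rz ^ k :: 'k ratfun)"
    by (simp add: rz_mult_rderiv_rz_power field_simps power2_eq_square)
  finally show ?thesis using nonpos by (simp add: power_int_minus)
qed

lemma rderiv_iter_mult_const:
  assumes "rderiv s = 0"
  shows "(rderiv ^^ i) (s * f) = s * (rderiv ^^ i) (f :: 'k::field ratfun)"
  by (induction i) (simp_all add: rderiv_mult assms)

lemma rderiv_iter_diff:
  "(rderiv ^^ i) (f - g) = (rderiv ^^ i) f - (rderiv ^^ i) (g :: 'k::field ratfun)"
  by (induction i) (simp_all add: rderiv_diff)

lemma apply_op_mult_const:
  "rderiv s = 0 \<Longrightarrow> apply_op n c (s * f) = s * apply_op n c (f :: 'k::field ratfun)"
  unfolding apply_op_def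
  by (simp only: rderiv_iter_mult_const) (simp add: sum_distrib_left ac_simps)

lemma apply_op_diff:
  "apply_op n c (f - g) = apply_op n c f - apply_op n c (g :: 'k::field ratfun)"
  unfolding apply_op_def by (simp add: rderiv_iter_diff sum_subtractf algebra_simps)

section \<open>Rational functions without pole at 0\<close>

definition regular_at_zero :: "'k::field ratfun \<Rightarrow> bool" where
  "regular_at_zero x \<longleftrightarrow> (\<exists>a b. poly b 0 \<noteq> 0 \<and> x = Fract a b)"

lemma regular_at_zeroE:
  assumes "regular_at_zero x"
  obtains a b where "poly b 0 \<noteq> 0" "b \<noteq> 0" "x = Fract a b"
  using assms unfolding regular_at_zero_def by force

lemma regular_at_zero_Fract: "poly b 0 \<noteq> 0 \<Longrightarrow> regular_at_zero (Fract a b)"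
  unfolding regular_at_zero_def by blast

lemma reval0_Fract:
  fixes a b :: "'k::field poly"
  assumes b: "poly b 0 \<noteq> 0"
  shows "reval0 (Fract a b) = poly a 0 / poly b 0"
proof -
  define n d where "n = rnum (Fract a b)" and "d = rden (Fract a b)"
  have "d \<noteq> 0" "Fract n d = Fract a b" "coprime n d"
    unfolding n_def d_def by (rule rden_nonzero, rule Fract_rnum_rden, rule coprime_rnum_rden)
  moreover have "b \<noteq> 0" using b by auto
  ultimately have "a * d = n * b" by (simp add: eq_fract)
  then have E: "poly a 0 * poly d 0 = poly n 0 * poly b 0" by (metis poly_mult)
  have "poly d 0 \<noteq> 0"
  proof
    assume "poly d 0 = 0"
    with E b have "[:0,1:] dvd n" "[:0,1:] dvd d" by (simp_all add: poly_eq_0_iff_dvd)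
    with \<open>coprime n d\<close> have "is_unit ([:0,1:] :: 'k poly)" by (rule coprime_common_divisor)
    then show False by (simp add: is_unit_iff_degree)
  qed
  with E b show ?thesis unfolding reval0_def n_def[symmetric] d_def[symmetric]
    by (simp add: field_simps)
qed

lemma regular_at_zero_Fract_poly [simp]: "regular_at_zero (Fract a 1)"
  and reval0_Fract_poly [simp]: "reval0 (Fract a 1) = poly a 0"
  by (simp_all add: regular_at_zero_Fract reval0_Fract)

lemma of_int_fract: "of_int m = Fract (of_int m) 1"
  by (cases m rule: int_cases2) (simp_all add: of_nat_fract)

lemma regular_at_zero_of_int [simp]: "regular_at_zero (of_int m)"
  and reval0_of_int [simp]: "reval0 (of_int m :: 'k::field ratfun) = of_int m"
  by (simp_all add: of_int_fract of_int_poly)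

lemma regular_at_zero_0 [simp]: "regular_at_zero 0"
  and reval0_0 [simp]: "reval0 (0 :: 'k::field ratfun) = 0"
  using regular_at_zero_of_int[of 0] reval0_of_int[of 0] by simp_all

lemma regular_at_zero_1 [simp]: "regular_at_zero 1"
  using regular_at_zero_of_int[of 1] by simp

lemma regular_at_zero_rz [simp]: "regular_at_zero rz"
  and reval0_rz [simp]: "reval0 (rz :: 'k::field ratfun) = 0"
  by (simp_all add: rz_def)

lemma
  assumes "regular_at_zero x" "regular_at_zero y"
  shows regular_at_zero_add [simp]: "regular_at_zero (x + y)"
    and reval0_add: "reval0 (x + y) = reval0 x + reval0 y"
  using assms
  by (auto elim!: regular_at_zeroE simp: regular_at_zero_Fract reval0_Fract add_divide_distrib)

lemma
  assumes "regular_at_zero x" "regular_at_zero y"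
  shows regular_at_zero_mult [simp]: "regular_at_zero (x * y)"
    and reval0_mult: "reval0 (x * y) = reval0 x * reval0 y"
  using assms
  by (auto elim!: regular_at_zeroE simp: regular_at_zero_Fract reval0_Fract)

lemma regular_at_zero_rderiv [simp]: "regular_at_zero x \<Longrightarrow> regular_at_zero (rderiv x)"
  by (auto elim!: regular_at_zeroE simp: regular_at_zero_Fract rderiv_Fract)

lemma regular_at_zero_sum:
  "(\<And>i. i \<in> S \<Longrightarrow> regular_at_zero (g i)) \<Longrightarrow> regular_at_zero (sum g S)"
  by (induction S rule: infinite_finite_induct) simp_all

lemma reval0_sum:
  "(\<And>i. i \<in> S \<Longrightarrow> regular_at_zero (g i)) \<Longrightarrow>
    reval0 (sum g S) = (\<Sum>i\<in>S. reval0 (g i))"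
  by (induction S rule: infinite_finite_induct) (simp_all add: reval0_add regular_at_zero_sum)

section \<open>Exponents at 0 of solutions\<close>

lemma poly_falling_poly_Suc:
  "poly (falling_poly (Suc k)) x = poly (falling_poly k) x * (x - of_nat k :: 'k::field)"
  by (simp add: falling_poly_def algebra_simps)

lemma rz_power_mult_rderiv_iter_power_int:
  fixes F :: "'k::field ratfun"
  assumes "regular_at_zero F"
  shows "\<exists>E. regular_at_zero E \<and> reval0 E = poly (falling_poly k) (of_int m) * reval0 F \<and>
            rz ^ k * (rderiv ^^ k) (rz powi m * F) = rz powi m * E"
proof (induction k)
  case 0
  then show ?case using assms by (simp add: falling_poly_def)
next
  case (Suc k)
  then obtain E where E: "regular_at_zero E"
      "reval0 E = poly (falling_poly k) (of_int m) * reval0 F"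
    and IH: "rz ^ k * (rderiv ^^ k) (rz powi m * F) = rz powi m * E" by blast
  define Y where "Y = (rderiv ^^ k) (rz powi m * F)"
  define E' where "E' = of_int (m - int k) * E + rz * rderiv E"
  have "rz * rderiv (rz ^ k * Y) = (rz * rderiv (rz ^ k)) * Y + rz ^ Suc k * rderiv Y"
    by (simp add: rderiv_mult algebra_simps)
  then have "rz * rderiv (rz ^ k * Y) = of_nat k * (rz ^ k * Y) + rz ^ Suc k * rderiv Y"
    by (simp only: rz_mult_rderiv_rz_power mult.assoc)
  then have "rz ^ Suc k * rderiv Y = rz * rderiv (rz powi m * E) - of_nat k * (rz powi m * E)"
    using IH unfolding Y_def by (simp add: algebra_simps)
  also have "\<dots> = rz powi m * E'"
  proof -
    have "rz * rderiv (rz powi m * E) =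
        (rz * rderiv (rz powi m)) * E + rz powi m * (rz * rderiv E)"
      by (simp add: rderiv_mult algebra_simps)
    then show ?thesis
      by (simp only: rz_mult_rderiv_rz_power_int) (simp add: E'_def algebra_simps)
  qed
  finally have "rz ^ Suc k * (rderiv ^^ Suc k) (rz powi m * F) = rz powi m * E'"
    by (simp add: Y_def)
  moreover have "regular_at_zero E'"
    using E(1) by (simp add: E'_def del: of_int_diff)
  moreover have "reval0 E' = poly (falling_poly (Suc k)) (of_int m) * reval0 F"
    using E
    by (simp add: E'_def reval0_add reval0_mult poly_falling_poly_Suc del: of_int_diff)
      (simp add: algebra_simps)
  ultimately show ?case by blast
qed

lemma poly_decomp_at_zero:
  fixes q :: "'k::field poly"
  assumes "q \<noteq> 0"
  obtains w where "q = [:0,1:] ^ order 0 q * w" "poly w 0 \<noteq> 0"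
  using order_decomp[OF assms, of 0] by (auto simp: poly_eq_0_iff_dvd)

lemma regular_at_zero_rz_power_mult:
  fixes a :: "'k::field ratfun"
  assumes "\<not> [:0,1:] ^ Suc j dvd rden a"
  shows "regular_at_zero (rz ^ j * a)"
proof -
  define d where "d = rden a"
  have "d \<noteq> 0" unfolding d_def by (rule rden_nonzero)
  then obtain w where w: "d = [:0,1:] ^ order 0 d * w" "poly w 0 \<noteq> 0"
    by (rule poly_decomp_at_zero)
  have "order 0 d \<le> j"
    using assms order_divides[of 0 "Suc j" d] unfolding d_def by simp
  then have "([:0,1:] :: 'k poly) ^ j = [:0,1:] ^ order 0 d * [:0,1:] ^ (j - order 0 d)"
    by (simp flip: power_add)
  have "rz ^ j * a = Fract ([:0,1:] ^ j) 1 * Fract (rnum a) d"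
    by (simp add: rz_power d_def Fract_rnum_rden)
  also have "\<dots> = Fract ([:0,1:] ^ j * rnum a) d"
    by simp
  also have "\<dots> = Fract ([:0,1:] ^ order 0 d * ([:0,1:] ^ (j - order 0 d) * rnum a))
                         ([:0,1:] ^ order 0 d * w)"
    by (subst w(1), subst \<open>[:0,1:] ^ j = _\<close>) (simp add: mult.assoc)
  also have "\<dots> = Fract ([:0,1:] ^ (j - order 0 d) * rnum a) w"
    using w(2) by (subst mult_fract_cancel) auto
  finally show ?thesis using w(2) by (simp add: regular_at_zero_Fract)
qed

definition regular_singular_at_zero :: "nat \<Rightarrow> (nat \<Rightarrow> 'k::field ratfun) \<Rightarrow> bool" where
  "regular_singular_at_zero n c \<longleftrightarrow>
     (\<forall>j\<in>{1..n}. regular_at_zero (rz ^ j * monic_coeff n c j))"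

lemma finite_points_regular_imp_regular_singular_at_zero:
  assumes "finite_points_regular n c"
  shows "regular_singular_at_zero n c"
proof -
  have "irreducible ([:0,1:] :: 'k::field poly)"
    by (rule irreducible_linear_field_poly) simp
  with assms show ?thesis
    unfolding finite_points_regular_def regular_singular_at_zero_def
    by (blast intro: regular_at_zero_rz_power_mult)
qed

lemma poly_indicial_poly_eq_0:
  fixes c :: "nat \<Rightarrow> 'k::field ratfun"
  assumes cn: "c n \<noteq> 0" and reg: "regular_singular_at_zero n c"
    and sol: "apply_op n c (rz powi m * F) = 0"
    and F: "regular_at_zero F" "reval0 F \<noteq> 0"
  shows "poly (indicial_poly n c) (of_int m) = 0"
proof -
  define f where "f = rz powi m * F"
  define A where "A j = rz ^ j * monic_coeff n c j" for j
  have A: "regular_at_zero (A j)" if "j \<le> n" for j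
    using reg that cn
    by (cases "j = 0") (auto simp: A_def regular_singular_at_zero_def monic_coeff_def)
  have "\<forall>k. \<exists>E. regular_at_zero E \<and> reval0 E = poly (falling_poly k) (of_int m) * reval0 F \<and>
            rz ^ k * (rderiv ^^ k) f = rz powi m * E"
    unfolding f_def using rz_power_mult_rderiv_iter_power_int[OF F(1)] by blast
  then obtain E where E: "\<And>k. regular_at_zero (E k)"
    "\<And>k. reval0 (E k) = poly (falling_poly k) (of_int m) * reval0 F"
    "\<And>k. rz ^ k * (rderiv ^^ k) f = rz powi m * E k"
    by (subst (asm) choice_iff) blast
  have "0 = rz ^ n * (apply_op n c f / c n)" using sol by (simp add: f_def)
  also have "\<dots> = (\<Sum>i\<le>n. (c i / c n) * (rz ^ n * (rderiv ^^ i) f))"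
    unfolding apply_op_def by (simp add: sum_divide_distrib sum_distrib_left ac_simps)
  also have "\<dots> = (\<Sum>j\<le>n. (c (n - j) / c n) * (rz ^ n * (rderiv ^^ (n - j)) f))"
    unfolding atMost_atLeast0 by (subst sum.atLeastAtMost_rev) simp
  also have "\<dots> = (\<Sum>j\<le>n. rz powi m * (A j * E (n - j)))"
  proof (rule sum.cong)
    fix j assume "j \<in> {..n}"
    then have "(rz :: 'k ratfun) ^ n = rz ^ j * rz ^ (n - j)" by (simp flip: power_add)
    then have "(c (n - j) / c n) * (rz ^ n * (rderiv ^^ (n - j)) f)
        = A j * (rz ^ (n - j) * (rderiv ^^ (n - j)) f)"
      by (simp add: A_def monic_coeff_def ac_simps)
    then show "(c (n - j) / c n) * (rz ^ n * (rderiv ^^ (n - j)) f) =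
        rz powi m * (A j * E (n - j))"
      by (simp add: E(3) ac_simps)
  qed simp
  also have "\<dots> = rz powi m * (\<Sum>j\<le>n. A j * E (n - j))"
    by (simp add: sum_distrib_left)
  finally have "(\<Sum>j\<le>n. A j * E (n - j)) = 0" by simp
  then have "0 = reval0 (\<Sum>j\<le>n. A j * E (n - j))" by simp
  also have "\<dots> = (\<Sum>j\<le>n. reval0 (A j) * reval0 (E (n - j)))"
    using A E(1) by (subst reval0_sum) (auto simp: reval0_mult)
  also have "\<dots> = (\<Sum>j\<le>n. reval0 (A j) * poly (falling_poly (n - j)) (of_int m)) * reval0 F"
    by (simp add: E(2) sum_distrib_right sum_distrib_left mult_ac)
  also have "(\<Sum>j\<le>n. reval0 (A j) * poly (falling_poly (n - j)) (of_int m)) =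
      poly (indicial_poly n c) (of_int m)"
    by (simp add: indicial_poly_def poly_sum A_def)
  finally show ?thesis using F(2) by simp
qed

lemma MOM_solution_exponent_eq_0:
  fixes c :: "nat \<Rightarrow> 'k::field ratfun"
  assumes "c n \<noteq> 0" "MOM_at_zero n c" "apply_op n c (rz powi m * F) = 0"
    and "regular_at_zero F" "reval0 F \<noteq> 0"
  shows "(of_int m :: 'k) = 0"
proof -
  have "regular_singular_at_zero n c"
    using assms(2) finite_points_regular_imp_regular_singular_at_zero
    unfolding MOM_at_zero_def fuchsian_def by blast
  with assms have "poly (indicial_poly n c) (of_int m) = 0"
    by (intro poly_indicial_poly_eq_0)
  with assms(2) show ?thesis by (simp add: MOM_at_zero_def)
qed

lemma ratfun_decomp_at_zero:
  fixes f :: "'k::field ratfun"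
  assumes "f \<noteq> 0"
  obtains m F where "f = rz powi m * F" "regular_at_zero F" "reval0 F \<noteq> 0"
proof -
  obtain a b where f: "f = Fract a b" "a \<noteq> 0" "b \<noteq> 0"
    using assms by (cases f rule: Fract_cases_nonzero) auto
  obtain a1 where a: "a = [:0,1:] ^ order 0 a * a1" "poly a1 0 \<noteq> 0"
    using poly_decomp_at_zero[OF f(2)] .
  obtain b1 where b: "b = [:0,1:] ^ order 0 b * b1" "poly b1 0 \<noteq> 0"
    using poly_decomp_at_zero[OF f(3)] .
  have "b1 \<noteq> 0" using b(2) by auto
  have "f = rz ^ order 0 a / rz ^ order 0 b * Fract a1 b1"
    using \<open>b1 \<noteq> 0\<close>
    by (subst f(1), subst a(1), subst b(1)) (simp add: rz_power Fract_eq_0_iff)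
  also have "\<dots> = rz powi (int (order 0 a) - int (order 0 b)) * Fract a1 b1"
    by (simp add: power_int_diff)
  finally show ?thesis
    using that a(2) b(2) by (simp add: regular_at_zero_Fract reval0_Fract)
qed

lemma coeff_order_0_nonzero:
  fixes q :: "'k::field poly"
  assumes "q \<noteq> 0"
  shows "coeff q (order 0 q) \<noteq> 0"
proof -
  obtain w where w: "q = [:0,1:] ^ order 0 q * w" "poly w 0 \<noteq> 0"
    using poly_decomp_at_zero[OF assms] .
  have "([:0,1:] :: 'k poly) ^ order 0 q = monom 1 (order 0 q)"
    by (simp add: monom_altdef)
  then have "coeff ([:0,1:] ^ order 0 q * w) (order 0 q) = poly w 0"
    by (simp add: coeff_monom_mult poly_0_coeff_0)
  with w show ?thesis by simp
qed

lemma CHAR_dvd_order_0_of_poly_mult_solution: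
  fixes c :: "nat \<Rightarrow> 'k::field ratfun"
  assumes "c n \<noteq> 0" "MOM_at_zero n c"
    and "apply_op n c f = 0" "f \<noteq> 0"
    and "apply_op n c (Fract N 1 * f) = 0" "N \<noteq> 0"
  shows "CHAR('k) dvd order 0 N"
proof -
  obtain m F where f: "f = rz powi m * F" "regular_at_zero F" "reval0 F \<noteq> 0"
    using ratfun_decomp_at_zero[OF assms(4)] .
  obtain N1 where N: "N = [:0,1:] ^ order 0 N * N1" "poly N1 0 \<noteq> 0"
    using poly_decomp_at_zero[OF assms(6)] .
  have "Fract N 1 * f = rz powi (int (order 0 N) + m) * (Fract N1 1 * F)"
    by (subst N(1)) (simp add: f(1) rz_power power_int_add mult_ac)
  with assms(5) have "apply_op n c (rz powi (int (order 0 N) + m) * (Fract N1 1 * F)) = 0"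
    by simp
  with assms(1,2) f N(2) have "(of_int (int (order 0 N) + m) :: 'k) = 0"
    by (intro MOM_solution_exponent_eq_0[where F = "Fract N1 1 * F"]) (simp_all add: reval0_mult)
  moreover have "(of_int m :: 'k) = 0"
    using MOM_solution_exponent_eq_0 assms(1-3) f by blast
  ultimately have "(of_nat (order 0 N) :: 'k) = 0" by simp
  then show ?thesis by (simp add: of_nat_eq_0_iff_char_dvd)
qed

lemma poly_mult_solution_eq_0:
  fixes c :: "nat \<Rightarrow> 'k::field ratfun"
  assumes "c n \<noteq> 0" "MOM_at_zero n c"
    and "apply_op n c f = 0" "f \<noteq> 0" "apply_op n c (Fract N 1 * f) = 0"
    and "\<And>j. CHAR('k) dvd j \<Longrightarrow> coeff N j = 0"
  shows "N = 0"
proof (rule ccontr)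
  assume "N \<noteq> 0"
  with assms have "coeff N (order 0 N) = 0"
    by (blast intro: CHAR_dvd_order_0_of_poly_mult_solution)
  with coeff_order_0_nonzero[OF \<open>N \<noteq> 0\<close>] show False by contradiction
qed

section \<open>Polynomials in z^p\<close>

definition poly_contract :: "nat \<Rightarrow> 'a::zero poly \<Rightarrow> 'a poly" where
  "poly_contract p X = Poly (map (\<lambda>i. coeff X (i * p)) [0..<Suc (degree X)])"

lemma coeff_poly_contract:
  assumes "p > 0"
  shows "coeff (poly_contract p X) i = coeff X (i * p)"
proof (cases "i \<le> degree X")
  case False
  with assms have "degree X < i * p"
    using less_le_trans[of _ i "i * p"] by simp
  with False show ?thesis by (simp add: poly_contract_def nth_default_def coeff_eq_0)
qed (simp add: poly_contract_def nth_default_def del: upt_Suc)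

lemma coeff_pcompose_monom:
  assumes "p > 0"
  shows "coeff (pcompose Q (monom (1::'a::comm_ring_1) p)) j =
    (if p dvd j then coeff Q (j div p) else 0)"
proof (induction Q arbitrary: j rule: pCons_induct)
  case (pCons a Q)
  have "coeff (pcompose (pCons a Q) (monom 1 p)) j
      = (if j = 0 then a else 0) + (if j < p then 0 else coeff (pcompose Q (monom 1 p)) (j - p))"
    by (cases j) (auto simp: pcompose_pCons coeff_monom_mult)
  moreover have "p dvd j \<longleftrightarrow> p dvd (j - p)" "p dvd j \<Longrightarrow> j div p = Suc ((j - p) div p)"
    if "p \<le> j" using that assms by (simp_all add: dvd_minus_self le_div_geq)
  ultimately show ?case
    using pCons.IH[of "j - p"] assms by (cases "j < p") (auto dest: dvd_imp_le)
qed simp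

lemma coeff_pcompose_poly_contract:
  assumes "p > 0"
  shows "coeff (pcompose (poly_contract p X) (monom (1::'a::comm_ring_1) p)) j =
    (if p dvd j then coeff X j else 0)"
  using assms by (simp add: coeff_pcompose_monom coeff_poly_contract)

lemma pcompose_poly_contract_eq:
  assumes "p > 0" "\<And>j. \<not> p dvd j \<Longrightarrow> coeff X j = (0::'a::comm_ring_1)"
  shows "pcompose (poly_contract p X) (monom 1 p) = X"
  by (rule poly_eqI) (simp add: coeff_pcompose_poly_contract assms)

lemma coeff_eq_0_if_pderiv_eq_0:
  fixes Y :: "'k::idom poly"
  assumes "pderiv Y = 0" "\<not> CHAR('k) dvd j"
  shows "coeff Y j = 0"
proof (cases j)
  case (Suc i)
  have "of_nat j * coeff Y j = coeff (pderiv Y) i" by (simp add: coeff_pderiv Suc)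
  with assms show ?thesis by (simp add: of_nat_eq_0_iff_char_dvd)
qed (use assms in simp)

lemma pderiv_pcompose_monom_CHAR: "pderiv (pcompose Q (monom 1 CHAR('k))) = (0 :: 'k::idom poly)"
  by (simp add: pderiv_pcompose pderiv_monom)

section \<open>The solution space over k(z^p)\<close>

lemma solution_ratio_in_subfield_zp:
  fixes c :: "nat \<Rightarrow> 'k::field ratfun"
  assumes char: "CHAR('k) = p" and p: "p > 0" and cn: "c n \<noteq> 0" and mom: "MOM_at_zero n c"
    and f: "apply_op n c f = 0" "f \<noteq> 0" and g: "apply_op n c g = 0"
  shows "g / f \<in> subfield_zp p"
proof -
  obtain a d where gf: "g / f = Fract a d" and "d \<noteq> 0" by (cases "g / f")
  define X D where "X = a * d ^ (p - 1)" and "D = d ^ p"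
  have "D \<noteq> 0" using \<open>d \<noteq> 0\<close> by (simp add: D_def)
  have "pderiv D = 0" by (simp add: D_def char[symmetric] pderiv_power)
  have "a * D = X * d" using p by (simp add: X_def D_def power_eq_if mult_ac)
  with \<open>d \<noteq> 0\<close> \<open>D \<noteq> 0\<close> gf have gX: "g = Fract X D * f"
    using f(2) by (simp add: eq_fract field_simps)
  define P where "P = pcompose (poly_contract p X) (monom 1 p)"
  define N where "N = X - P"
  have "Fract N 1 = Fract D 1 * Fract X D - Fract P 1"
    using \<open>D \<noteq> 0\<close> by (simp add: N_def eq_fract algebra_simps)
  then have "Fract N 1 * f = Fract D 1 * g - Fract P 1 * f"
    by (simp only: gX left_diff_distrib mult.assoc)
  moreover have "rderiv (Fract D 1) = 0" "rderiv (Fract P 1) = 0"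
    using \<open>pderiv D = 0\<close> pderiv_pcompose_monom_CHAR[of "poly_contract p X"]
    by (simp_all add: rderiv_Fract_poly P_def char fract_collapse)
  ultimately have "apply_op n c (Fract N 1 * f) = 0"
    using f(1) g by (simp add: apply_op_diff apply_op_mult_const)
  moreover have "coeff N j = 0" if "CHAR('k) dvd j" for j
    using that p char by (simp add: N_def P_def coeff_pcompose_poly_contract)
  ultimately have "N = 0"
    using cn mom f by (intro poly_mult_solution_eq_0)
  then have "X = pcompose (poly_contract p X) (monom 1 p)" by (simp add: N_def P_def)
  moreover have "D = pcompose (poly_contract p D) (monom 1 p)"
    using p coeff_eq_0_if_pderiv_eq_0[OF \<open>pderiv D = 0\<close>]
    by (intro pcompose_poly_contract_eq[symmetric]) (simp_all add: char[symmetric])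
  ultimately have "Fract X D \<in> subfield_zp p"
    unfolding subfield_zp_def by (metis (mono_tags, lifting) mem_Collect_eq)
  with gX f(2) show ?thesis by simp
qed

theorem mainTheorem10:
  fixes c :: "nat \<Rightarrow> ('k::{field,finite}) ratfun" and n p :: nat
  assumes "CHAR('k) = p"
    and "c n \<noteq> 0"
    and "MOM_at_zero n c"
    and "sol_space n c \<noteq> {0}"
  shows "dim_one_over (subfield_zp p) (sol_space n c)"
proof -
  have "p > 0" using assms(1) finite_imp_CHAR_pos[where 'a='k] by simp
  have "0 \<in> sol_space n c"
    using apply_op_mult_const[of 0 n c 0] by (simp add: sol_space_def)
  with assms(4) obtain f where f: "f \<in> sol_space n c" "f \<noteq> 0" by blast
  have "g / f \<in> subfield_zp p" if "g \<in> sol_space n c" for g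
    using solution_ratio_in_subfield_zp[OF assms(1) \<open>p > 0\<close> assms(2,3)] that f
    by (simp add: sol_space_def)
  moreover have "g = g / f * f" for g using f(2) by simp
  ultimately show ?thesis unfolding dim_one_over_def using f by blast
qed

end
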